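(* Let $p$ be an odd prime, $i\in\mathbb{N}_0$ and $\gamma\in\hat H_i$. Let $\tilde\gamma$ be the unique $\mathbb{Q}_p$-linear extension of $\gamma$ to $K\wedge_{\mathbb{Q}_p}K\to K$. Then for every $j\in\mathbb{N}_0$ with $j\equiv i\pmod{p-1}$, the restriction of $\tilde\gamma$ to $\mathfrak{p}^j\wedge\mathfrak{p}^j$ lies in $\hat H_j$.
   Context: Let $\theta$ be a primitive $p$-th root of unity, $K=\mathbb{Q}_p(\theta)$, $\mathcal{O}$ its ring of integers, $\mathfrak{p}$ its maximal ideal; $\mathfrak{p}^j$ is the unique ideal of index $p^j$ in $\mathcal{O}$. $P=\langle\theta\rangle$ acts by multiplication on ideals and diagonally on exterior squares $\mathfrak{p}^i\wedge\mathfrak{p}^i$ (over $\mathbb{Z}_p$); $\mathrm{Hom}_P$ denotes $P$-equivariant $\mathbb{Z}_p$-linear maps. $\hat{H}_i=\{\gamma\in\mathrm{Hom}_P(\mathfrak{p}^i\wedge\mathfrak{p}^i,\mathfrak{p}^{2i+1}) \mid \gamma \text{ surjective}\}$. *)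

theory Defs
  imports "HOL-Number_Theory.Number_Theory"
begin

text \<open>
The p-adic integers Z_p are represented as compatible
sequences of residues (the inverse limit of Z/p^n):  a :: nat => int with
0 <= a n < p^n and a (Suc n) mod p^n = a n.
The ring of integers O = Z_p[theta] of K = Q_p(theta) is the free Z_p-module
with basis 1, theta, ..., theta^(p-2); an element is its coordinate function
c :: nat => zp (coordinates at indices >= p-1 are zero).
Multiplication by theta uses theta^(p-1) = -(1 + theta + ... + theta^(p-2)).
\<close>

type_synonym zp = "nat \<Rightarrow> int"
type_synonym cyc = "nat \<Rightarrow> zp"

definition Zp :: "nat \<Rightarrow> zp set" where
  "Zp p = {a. \<forall>n. 0 \<le> a n \<and> a n < int p ^ n \<and> a (Suc n) mod int p ^ n = a n}"

definition zadd :: "nat \<Rightarrow> zp \<Rightarrow> zp \<Rightarrow> zp" where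
  "zadd p a b = (\<lambda>n. (a n + b n) mod int p ^ n)"

definition zmul :: "nat \<Rightarrow> zp \<Rightarrow> zp \<Rightarrow> zp" where
  "zmul p a b = (\<lambda>n. (a n * b n) mod int p ^ n)"

definition zneg :: "nat \<Rightarrow> zp \<Rightarrow> zp" where
  "zneg p a = (\<lambda>n. (- a n) mod int p ^ n)"

definition zzero :: zp where
  "zzero = (\<lambda>n. 0)"

definition zofint :: "nat \<Rightarrow> int \<Rightarrow> zp" where
  "zofint p m = (\<lambda>n. m mod int p ^ n)"

definition Ocar :: "nat \<Rightarrow> cyc set" where
  "Ocar p = {c. (\<forall>k < p - 1. c k \<in> Zp p) \<and> (\<forall>k \<ge> p - 1. c k = zzero)}"

definition Ozero :: cyc where
  "Ozero = (\<lambda>k. zzero)"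

definition Oadd :: "nat \<Rightarrow> cyc \<Rightarrow> cyc \<Rightarrow> cyc" where
  "Oadd p c d = (\<lambda>k. zadd p (c k) (d k))"

definition Oneg :: "nat \<Rightarrow> cyc \<Rightarrow> cyc" where
  "Oneg p c = (\<lambda>k. zneg p (c k))"

definition Osmult :: "nat \<Rightarrow> zp \<Rightarrow> cyc \<Rightarrow> cyc" where
  "Osmult p s c = (\<lambda>k. zmul p s (c k))"

definition Otheta :: "nat \<Rightarrow> cyc \<Rightarrow> cyc" where
  "Otheta p c = (\<lambda>k. if k = 0 then zneg p (c (p - 2))
                     else if k < p - 1 then zadd p (c (k - 1)) (zneg p (c (p - 2)))
                     else zzero)"

text \<open>Multiplication by the uniformiser pi = theta - 1.\<close>
definition Opi :: "nat \<Rightarrow> cyc \<Rightarrow> cyc" where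
  "Opi p c = Oadd p (Otheta p c) (Oneg p c)"

definition Pideal :: "nat \<Rightarrow> nat \<Rightarrow> cyc set" where
  "Pideal p j = (Opi p ^^ j) ` Ocar p"

definition Ospan :: "nat \<Rightarrow> cyc set \<Rightarrow> cyc set" where
  "Ospan p S = {c. \<exists>xs :: (zp \<times> cyc) list.
      set (map fst xs) \<subseteq> Zp p \<and> set (map snd xs) \<subseteq> S \<and>
      c = foldr (\<lambda>(s, x) acc. Oadd p (Osmult p s x) acc) xs Ozero}"

text \<open>
Hhat p i: P-equivariant Z_p-linear maps  p^i /\ p^i -> p^(2i+1) that are surjective,
represented via the universal property of the exterior square as alternating
Z_p-bilinear maps  beta : p^i x p^i -> p^(2i+1)  (only the values on p^i x p^i matter);
equivariance: beta (theta x) (theta y) = theta (beta x y);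
surjectivity: the Z_p-span of the image is all of p^(2i+1).
\<close>
definition Hhat :: "nat \<Rightarrow> nat \<Rightarrow> (cyc \<Rightarrow> cyc \<Rightarrow> cyc) set" where
  "Hhat p i = {\<beta>.
     (\<forall>x\<in>Pideal p i. \<forall>y\<in>Pideal p i. \<beta> x y \<in> Pideal p (2 * i + 1)) \<and>
     (\<forall>x\<in>Pideal p i. \<forall>x'\<in>Pideal p i. \<forall>y\<in>Pideal p i.
        \<beta> (Oadd p x x') y = Oadd p (\<beta> x y) (\<beta> x' y) \<and>
        \<beta> y (Oadd p x x') = Oadd p (\<beta> y x) (\<beta> y x')) \<and>
     (\<forall>s\<in>Zp p. \<forall>x\<in>Pideal p i. \<forall>y\<in>Pideal p i.
        \<beta> (Osmult p s x) y = Osmult p s (\<beta> x y) \<and>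
        \<beta> y (Osmult p s x) = Osmult p s (\<beta> y x)) \<and>
     (\<forall>x\<in>Pideal p i. \<beta> x x = Ozero) \<and>
     (\<forall>x\<in>Pideal p i. \<forall>y\<in>Pideal p i. \<beta> (Otheta p x) (Otheta p y) = Otheta p (\<beta> x y)) \<and>
     Ospan p ((\<lambda>(x, y). \<beta> x y) ` (Pideal p i \<times> Pideal p i)) = Pideal p (2 * i + 1)}"

end

(*
  Write pi = theta - 1, so that the ideal p^j is pi^j O.  Expanding theta^p = (pi + 1)^p
  binomially gives Phi_p(X) = (X - 1)^(p-1) + p e(X) with e(1) = 1, hence pi^(p-1) = -p e(theta)
  in O.  As 1 - e(theta) is divisible by pi, e(theta) is a unit (its inverse is a p-adically
  convergent geometric series), so pi^(m + q(p-1)) O = p^q pi^m O.  For j = i + q(p-1),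
  multiplication by p^q is therefore a Z_p[P]-isomorphism pi^i O -> pi^j O, and multiplication
  by p^(2q) one pi^(2i+1) O -> pi^(2j+1) O; conjugating gamma by them gives an element of Hhat_j
  (and symmetrically for j < i).  It is the restriction of the Q_p-bilinear extension of gamma,
  since that extension maps (p^k x, p^k y) to p^(2k) times its value at (x, y).
*)

theory Submission
  imports Defs "HOL-Computational_Algebra.Polynomial"
begin

section \<open>Arithmetic in \<open>Z\<^sub>p\<close> and \<open>O\<close>\<close>

lemma Zp_D: "a \<in> Zp p \<Longrightarrow> 0 \<le> a n \<and> a n < int p ^ n \<and> a (Suc n) mod int p ^ n = a n"
  by (simp add: Zp_def)

lemma Zp_mod_le:
  assumes "a \<in> Zp p" "n \<le> m"
  shows "a m mod int p ^ n = a n"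
  using assms(2)
proof (induction m)
  case 0
  then show ?case using Zp_D[OF assms(1), of 0] by simp
next
  case (Suc m)
  show ?case
  proof (cases "n = Suc m")
    case True
    then show ?thesis using Zp_D[OF assms(1), of n] by simp
  next
    case False
    then have "n \<le> m" using Suc by simp
    then have "int p ^ n dvd int p ^ m" by (simp add: le_imp_power_dvd)
    then have "a (Suc m) mod int p ^ n = (a (Suc m) mod int p ^ m) mod int p ^ n"
      by (simp add: mod_mod_cancel)
    also have "\<dots> = a m mod int p ^ n" using Zp_D[OF assms(1), of m] by simp
    finally show ?thesis using Suc.IH[OF \<open>n \<le> m\<close>] by simp
  qed
qed

lemma Zp_modI:
  assumes "p > 0" "\<And>n. a n = f n mod int p ^ n"
    "\<And>n. f (Suc n) mod int p ^ n = f n mod int p ^ n"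
  shows "a \<in> Zp p"
proof -
  have "a (Suc n) mod int p ^ n = f (Suc n) mod int p ^ n" for n
    unfolding assms(2)[of "Suc n"] by (rule mod_mod_cancel) simp
  then show ?thesis using assms unfolding Zp_def by simp
qed

lemma zadd_Zp:
  assumes "p > 0" "a \<in> Zp p" "b \<in> Zp p"
  shows "zadd p a b \<in> Zp p"
proof (rule Zp_modI[where f = "\<lambda>n. a n + b n"])
  fix n
  have "(a (Suc n) + b (Suc n)) mod int p ^ n
      = (a (Suc n) mod int p ^ n + b (Suc n) mod int p ^ n) mod int p ^ n"
    by (rule mod_add_eq[symmetric])
  then show "(a (Suc n) + b (Suc n)) mod int p ^ n = (a n + b n) mod int p ^ n"
    using Zp_D[OF assms(2), of n] Zp_D[OF assms(3), of n] by simp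
qed (simp_all add: zadd_def assms)

lemma zmul_Zp:
  assumes "p > 0" "a \<in> Zp p" "b \<in> Zp p"
  shows "zmul p a b \<in> Zp p"
proof (rule Zp_modI[where f = "\<lambda>n. a n * b n"])
  fix n
  have "(a (Suc n) * b (Suc n)) mod int p ^ n
      = (a (Suc n) mod int p ^ n * (b (Suc n) mod int p ^ n)) mod int p ^ n"
    by (rule mod_mult_eq[symmetric])
  then show "(a (Suc n) * b (Suc n)) mod int p ^ n = (a n * b n) mod int p ^ n"
    using Zp_D[OF assms(2), of n] Zp_D[OF assms(3), of n] by simp
qed (simp_all add: zmul_def assms)

lemma zneg_Zp:
  assumes "p > 0" "a \<in> Zp p"
  shows "zneg p a \<in> Zp p"
proof (rule Zp_modI[where f = "\<lambda>n. - a n"])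
  fix n
  have "(- a (Suc n)) mod int p ^ n = (- (a (Suc n) mod int p ^ n)) mod int p ^ n"
    by (rule mod_minus_eq[symmetric])
  then show "(- a (Suc n)) mod int p ^ n = (- a n) mod int p ^ n"
    using Zp_D[OF assms(2), of n] by simp
qed (simp_all add: zneg_def assms)

lemma zofint_Zp:
  assumes "p > 0"
  shows "zofint p m \<in> Zp p"
  by (rule Zp_modI[where f = "\<lambda>n. m", OF assms]) (simp_all add: zofint_def)

lemma zzero_Zp: "p > 0 \<Longrightarrow> zzero \<in> Zp p"
  by (simp add: Zp_def zzero_def)

lemma zmul_zadd: "zmul p s (zadd p a b) = zadd p (zmul p s a) (zmul p s b)"
  by (simp add: zmul_def zadd_def fun_eq_iff mod_simps distrib_left)

lemma zmul_zmul: "zmul p s (zmul p t a) = zmul p (zmul p s t) a"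
  by (simp add: zmul_def fun_eq_iff mod_simps mult.assoc)

lemma zmul_commute: "zmul p s t = zmul p t s"
  by (simp add: zmul_def fun_eq_iff mult.commute)

lemma zmul_zneg: "zmul p s (zneg p a) = zneg p (zmul p s a)"
  by (simp add: zmul_def zneg_def fun_eq_iff mod_simps)

lemma zmul_zzero: "zmul p s zzero = zzero" "zmul p zzero s = zzero"
  by (simp_all add: zmul_def zzero_def fun_eq_iff)

lemma zneg_zadd: "zneg p (zadd p a b) = zadd p (zneg p a) (zneg p b)"
  by (simp add: zneg_def zadd_def fun_eq_iff mod_simps)

lemma zadd_zadd_swap: "zadd p (zadd p a b) (zadd p c d) = zadd p (zadd p a c) (zadd p b d)"
  by (simp add: zadd_def fun_eq_iff mod_add_eq) (simp add: ac_simps)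

lemma zadd_zzero: "zadd p zzero zzero = zzero" and zneg_zzero: "zneg p zzero = zzero"
  by (simp_all add: zadd_def zneg_def zzero_def fun_eq_iff)

lemma zofint_mult: "zmul p (zofint p a) (zofint p b) = zofint p (a * b)"
  by (simp add: zmul_def zofint_def fun_eq_iff mod_simps)

lemma Osmult_Oadd: "Osmult p s (Oadd p c d) = Oadd p (Osmult p s c) (Osmult p s d)"
  by (simp add: Osmult_def Oadd_def zmul_zadd)

lemma Osmult_Osmult: "Osmult p s (Osmult p t c) = Osmult p (zmul p s t) c"
  by (simp add: Osmult_def zmul_zmul)

lemma Osmult_commute: "Osmult p s (Osmult p t c) = Osmult p t (Osmult p s c)"
  by (simp add: Osmult_Osmult zmul_commute)

lemma Osmult_Oneg: "Osmult p s (Oneg p c) = Oneg p (Osmult p s c)"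
  by (simp add: Osmult_def Oneg_def zmul_zneg)

lemma Osmult_zzero: "Osmult p zzero c = Ozero"
  by (simp add: Osmult_def Ozero_def zmul_zzero)

lemma Osmult_Otheta: "Osmult p s (Otheta p c) = Otheta p (Osmult p s c)"
  by (simp add: Osmult_def Otheta_def fun_eq_iff zmul_zneg zmul_zadd zmul_zzero)

lemma Osmult_Opi: "Osmult p s (Opi p c) = Opi p (Osmult p s c)"
  by (simp add: Opi_def Osmult_Oadd Osmult_Otheta Osmult_Oneg)

lemma Osmult_Opi_pow: "Osmult p s ((Opi p ^^ j) c) = (Opi p ^^ j) (Osmult p s c)"
  by (induction j) (simp_all add: Osmult_Opi)

lemma Oneg_Oadd: "Oneg p (Oadd p c d) = Oadd p (Oneg p c) (Oneg p d)"
  by (simp add: Oneg_def Oadd_def zneg_zadd)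

lemma Otheta_Oadd: "Otheta p (Oadd p c d) = Oadd p (Otheta p c) (Otheta p d)"
  by (simp add: Otheta_def Oadd_def fun_eq_iff zneg_zadd zadd_zzero zneg_zzero zadd_zadd_swap)

lemma Otheta_Oneg: "Otheta p (Oneg p c) = Oneg p (Otheta p c)"
  by (simp add: Otheta_def Oneg_def fun_eq_iff zneg_zadd zneg_zzero)

lemma Oadd_Oadd_swap: "Oadd p (Oadd p a b) (Oadd p c d) = Oadd p (Oadd p a c) (Oadd p b d)"
  by (simp add: Oadd_def zadd_zadd_swap)

lemma Opi_Oadd: "Opi p (Oadd p c d) = Oadd p (Opi p c) (Opi p d)"
  by (simp add: Opi_def Otheta_Oadd Oneg_Oadd Oadd_Oadd_swap)

lemma Opi_pow_Oadd: "(Opi p ^^ j) (Oadd p c d) = Oadd p ((Opi p ^^ j) c) ((Opi p ^^ j) d)"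
  by (induction j) (simp_all add: Opi_Oadd)

lemma Otheta_Opi_pow: "Otheta p ((Opi p ^^ j) c) = (Opi p ^^ j) (Otheta p c)"
proof -
  have "Otheta p (Opi p c) = Opi p (Otheta p c)" for c
    by (simp add: Opi_def Otheta_Oadd Otheta_Oneg)
  then show ?thesis by (induction j) simp_all
qed

lemma Ocar_D:
  "c \<in> Ocar p \<Longrightarrow> k < p - 1 \<Longrightarrow> c k \<in> Zp p"
  "c \<in> Ocar p \<Longrightarrow> \<not> k < p - 1 \<Longrightarrow> c k = zzero"
  by (auto simp: Ocar_def)

lemma OcarI:
  "(\<And>k. k < p - 1 \<Longrightarrow> c k \<in> Zp p) \<Longrightarrow> (\<And>k. \<not> k < p - 1 \<Longrightarrow> c k = zzero) \<Longrightarrow> c \<in> Ocar p"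
  by (auto simp: Ocar_def)

lemma Ozero_Ocar: "p > 0 \<Longrightarrow> Ozero \<in> Ocar p"
  by (auto simp: Ocar_def Ozero_def zzero_Zp)

lemma Oadd_Ocar: "p > 0 \<Longrightarrow> c \<in> Ocar p \<Longrightarrow> d \<in> Ocar p \<Longrightarrow> Oadd p c d \<in> Ocar p"
  by (rule OcarI) (auto simp: Oadd_def Ocar_D zadd_Zp zadd_zzero)

lemma Oneg_Ocar: "p > 0 \<Longrightarrow> c \<in> Ocar p \<Longrightarrow> Oneg p c \<in> Ocar p"
  by (rule OcarI) (auto simp: Oneg_def Ocar_D zneg_Zp zneg_zzero)

lemma Osmult_Ocar: "p > 0 \<Longrightarrow> s \<in> Zp p \<Longrightarrow> c \<in> Ocar p \<Longrightarrow> Osmult p s c \<in> Ocar p"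
  by (rule OcarI) (auto simp: Osmult_def Ocar_D zmul_Zp zmul_zzero)

lemma Otheta_Ocar:
  assumes "p > 1" "c \<in> Ocar p"
  shows "Otheta p c \<in> Ocar p"
proof (rule OcarI)
  fix k
  assume k: "k < p - 1"
  then have "c (p - 2) \<in> Zp p" "k > 0 \<Longrightarrow> c (k - 1) \<in> Zp p"
    using assms by (auto intro: Ocar_D)
  then show "Otheta p c k \<in> Zp p"
    using k assms(1) by (simp add: Otheta_def zneg_Zp zadd_Zp)
qed (use assms(1) in \<open>auto simp: Otheta_def\<close>)

lemma Opi_pow_Ocar: "p > 1 \<Longrightarrow> c \<in> Ocar p \<Longrightarrow> (Opi p ^^ j) c \<in> Ocar p"
  by (induction j) (simp_all add: Opi_def Oadd_Ocar Otheta_Ocar Oneg_Ocar)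

lemma Pideal_subset_Ocar: "p > 1 \<Longrightarrow> Pideal p j \<subseteq> Ocar p"
  unfolding Pideal_def using Opi_pow_Ocar by blast

section \<open>\<open>O\<close> modulo \<open>p\<^sup>n\<close>\<close>

text \<open>\<open>O/p\<^sup>nO\<close> is \<open>\<int>[X]/(\<Phi>\<^sub>p, p\<^sup>n)\<close> with \<open>\<theta>\<close> acting as \<open>X\<close>: \<open>approx_poly p n c\<close> represents
  the class of \<open>c\<close>, and \<open>cyclo_cong p n\<close> is congruence in that ring.\<close>

definition cyclo_poly :: "nat \<Rightarrow> int poly" where
  "cyclo_poly p = (\<Sum>k<p. monom 1 k)"

definition approx_poly :: "nat \<Rightarrow> nat \<Rightarrow> cyc \<Rightarrow> int poly" where
  "approx_poly p n c = (\<Sum>k<p - 1. monom (c k n) k)"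

definition cyclo_cong :: "nat \<Rightarrow> nat \<Rightarrow> int poly \<Rightarrow> int poly \<Rightarrow> bool" where
  "cyclo_cong p n f g \<longleftrightarrow> (\<exists>q w. f - g = cyclo_poly p * q + smult (int p ^ n) w)"

lemma coeff_cyclo_poly: "coeff (cyclo_poly p) k = (if k < p then 1 else 0)"
  by (simp add: cyclo_poly_def coeff_sum)

lemma degree_cyclo_poly: "p > 0 \<Longrightarrow> degree (cyclo_poly p) = p - 1"
  by (rule order_antisym[OF degree_le le_degree]) (auto simp: coeff_cyclo_poly)

lemma cyclo_poly_eq_geometric_sum: "cyclo_poly p = (\<Sum>k<p. [:0, 1:] ^ k)"
  by (simp add: cyclo_poly_def monom_altdef)

lemma coeff_approx_poly: "coeff (approx_poly p n c) k = (if k < p - 1 then c k n else 0)"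
  by (simp add: approx_poly_def coeff_sum)

lemma cyclo_cong_refl [simp]: "cyclo_cong p n f f"
  unfolding cyclo_cong_def by (rule exI[of _ 0], rule exI[of _ 0]) simp

lemma cyclo_cong_iff_diff: "cyclo_cong p n f g \<longleftrightarrow> cyclo_cong p n (f - g) 0"
  by (simp add: cyclo_cong_def)

lemma cyclo_cong_add:
  assumes "cyclo_cong p n f g" "cyclo_cong p n f' g'"
  shows "cyclo_cong p n (f + f') (g + g')"
proof -
  obtain q w q' w' where "f - g = cyclo_poly p * q + smult (int p ^ n) w"
    "f' - g' = cyclo_poly p * q' + smult (int p ^ n) w'"
    using assms unfolding cyclo_cong_def by blast
  then have "(f + f') - (g + g') = cyclo_poly p * (q + q') + smult (int p ^ n) (w + w')"
    by (simp add: algebra_simps smult_add_right)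
  then show ?thesis unfolding cyclo_cong_def by blast
qed

lemma cyclo_cong_mult_left:
  assumes "cyclo_cong p n f g"
  shows "cyclo_cong p n (h * f) (h * g)"
proof -
  obtain q w where "f - g = cyclo_poly p * q + smult (int p ^ n) w"
    using assms unfolding cyclo_cong_def by blast
  then have "h * f - h * g = cyclo_poly p * (h * q) + smult (int p ^ n) (h * w)"
    by (simp add: algebra_simps flip: right_diff_distrib)
  then show ?thesis unfolding cyclo_cong_def by blast
qed

lemma cyclo_cong_mult_right: "cyclo_cong p n f g \<Longrightarrow> cyclo_cong p n (f * h) (g * h)"
  using cyclo_cong_mult_left by (metis mult.commute)

lemma cyclo_cong_smult: "cyclo_cong p n f g \<Longrightarrow> cyclo_cong p n (smult a f) (smult a g)"
  using cyclo_cong_mult_left[of p n f g "[:a:]"] by simp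

lemma cyclo_cong_neg: "cyclo_cong p n f g \<Longrightarrow> cyclo_cong p n (- f) (- g)"
  using cyclo_cong_smult[of p n f g "-1"] by simp

lemma cyclo_cong_sym: "cyclo_cong p n f g \<Longrightarrow> cyclo_cong p n g f"
  using cyclo_cong_neg by (metis cyclo_cong_iff_diff minus_diff_eq neg_0_equal_iff_equal)

lemma cyclo_cong_trans [trans]:
  assumes "cyclo_cong p n f g" "cyclo_cong p n g h"
  shows "cyclo_cong p n f h"
proof -
  have "cyclo_cong p n ((f - g) + (g - h)) (0 + 0)"
    using assms by (intro cyclo_cong_add) (simp_all flip: cyclo_cong_iff_diff)
  then show ?thesis by (simp add: cyclo_cong_iff_diff[of p n f h])
qed

lemma cyclo_cong_cyclo_poly_add: "cyclo_cong p n (cyclo_poly p * q + f) f"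
  unfolding cyclo_cong_def by (rule exI[of _ q], rule exI[of _ 0]) simp

lemma cyclo_cong_add_zero: "cyclo_cong p n h 0 \<Longrightarrow> cyclo_cong p n (f + h) f"
  using cyclo_cong_add[OF cyclo_cong_refl, of p n h 0 f] by simp

lemma cyclo_cong_zeroI:
  assumes "\<And>k. int p ^ n dvd coeff f k"
  shows "cyclo_cong p n f 0"
proof -
  have "f = smult (int p ^ n) (map_poly (\<lambda>a. a div int p ^ n) f)"
    by (rule poly_eqI) (use assms in \<open>simp add: coeff_map_poly\<close>)
  then show ?thesis unfolding cyclo_cong_def by (metis add_0 diff_zero mult_zero_right)
qed

lemma cyclo_cong_modI:
  assumes "\<And>k. coeff f k mod int p ^ n = coeff g k mod int p ^ n"
  shows "cyclo_cong p n f g"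
  using cyclo_cong_zeroI[of p n "f - g"] assms cyclo_cong_iff_diff by (simp add: mod_eq_dvd_iff)

lemma cyclo_cong_power:
  assumes "cyclo_cong p 1 f 0"
  shows "cyclo_cong p n (f ^ n) 0"
proof -
  obtain a b where ab: "f = cyclo_poly p * a + smult (int p) b"
    using assms unfolding cyclo_cong_def by auto
  show ?thesis
  proof (induction n)
    case 0
    show ?case unfolding cyclo_cong_def by (rule exI[of _ 0], rule exI[of _ 1]) simp
  next
    case (Suc n)
    then obtain q w where qw: "f ^ n = cyclo_poly p * q + smult (int p ^ n) w"
      unfolding cyclo_cong_def by auto
    have "f ^ Suc n = f * f ^ n" by simp
    also have "\<dots> = cyclo_poly p * (a * (cyclo_poly p * q + smult (int p ^ n) w) + smult (int p) b * q)
        + smult (int p ^ Suc n) (b * w)"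
      unfolding qw by (subst ab) (simp add: algebra_simps smult_add_right)
    finally show ?case unfolding cyclo_cong_def by auto
  qed
qed

lemma approx_poly_Ozero [simp]: "approx_poly p n Ozero = 0"
  by (simp add: approx_poly_def Ozero_def zzero_def)

lemma approx_poly_Oadd:
  "cyclo_cong p n (approx_poly p n (Oadd p c d)) (approx_poly p n c + approx_poly p n d)"
  by (rule cyclo_cong_modI) (simp add: coeff_approx_poly Oadd_def zadd_def)

lemma approx_poly_Oneg: "cyclo_cong p n (approx_poly p n (Oneg p c)) (- approx_poly p n c)"
  by (rule cyclo_cong_modI) (simp add: coeff_approx_poly Oneg_def zneg_def)

lemma approx_poly_Osmult_zofint:
  "cyclo_cong p n (approx_poly p n (Osmult p (zofint p a) c)) (smult a (approx_poly p n c))"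
  by (rule cyclo_cong_modI) (simp add: coeff_approx_poly Osmult_def zmul_def zofint_def mod_simps)

lemma approx_poly_Otheta:
  assumes "p > 1"
  shows "cyclo_cong p n (approx_poly p n (Otheta p c)) ([:0, 1:] * approx_poly p n c)"
proof -
  have "cyclo_cong p n (approx_poly p n (Otheta p c))
      (cyclo_poly p * [:- c (p - 2) n:] + [:0, 1:] * approx_poly p n c)"
  proof (rule cyclo_cong_modI)
    fix k
    consider "k = 0" | "0 < k" "k < p - 1" | "k = p - 1" | "k > p - 1"
      by linarith
    then show "coeff (approx_poly p n (Otheta p c)) k mod int p ^ n
      = coeff (cyclo_poly p * [:- c (p - 2) n:] + [:0, 1:] * approx_poly p n c) k mod int p ^ n"
    proof cases
      case 3
      then have "k - 1 = p - 2" "k \<noteq> 0" using assms by auto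
      then show ?thesis
        by (auto simp: coeff_approx_poly coeff_cyclo_poly coeff_pCons Otheta_def split: nat.split)
    qed (use assms in \<open>auto simp: coeff_approx_poly coeff_cyclo_poly coeff_pCons Otheta_def
          zneg_def zadd_def mod_simps split: nat.split\<close>)
  qed
  then show ?thesis using cyclo_cong_trans[OF _ cyclo_cong_cyclo_poly_add] by blast
qed

lemma approx_poly_Opi_pow:
  assumes "p > 1"
  shows "cyclo_cong p n (approx_poly p n ((Opi p ^^ j) c)) ([:-1, 1:] ^ j * approx_poly p n c)"
proof (induction j)
  case (Suc j)
  let ?c = "(Opi p ^^ j) c"
  have "cyclo_cong p n (approx_poly p n ((Opi p ^^ Suc j) c))
      (approx_poly p n (Otheta p ?c) + approx_poly p n (Oneg p ?c))"
    by (simp add: Opi_def approx_poly_Oadd)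
  also have "cyclo_cong p n \<dots> ([:0, 1:] * approx_poly p n ?c + - approx_poly p n ?c)"
    by (rule cyclo_cong_add[OF approx_poly_Otheta[OF assms] approx_poly_Oneg])
  also have "[:0, 1:] * approx_poly p n ?c + - approx_poly p n ?c = [:-1, 1:] * approx_poly p n ?c"
    by simp
  also have "cyclo_cong p n \<dots> ([:-1, 1:] * ([:-1, 1:] ^ j * approx_poly p n c))"
    by (rule cyclo_cong_mult_left[OF Suc])
  finally show ?case by (simp only: power_Suc mult.assoc)
qed simp

lemma cyclo_cong_zero_coeff_dvd:
  assumes p: "p > 1" and low: "\<And>k. k \<ge> p - 1 \<Longrightarrow> coeff f k = 0"
    and cong: "cyclo_cong p n f 0"
  shows "int p ^ n dvd coeff f k"
proof -
  let ?\<Phi> = "cyclo_poly p"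
  have lc: "lead_coeff ?\<Phi> = 1"
    using p by (simp add: degree_cyclo_poly coeff_cyclo_poly)
  then have \<Phi>0: "?\<Phi> \<noteq> 0" by auto
  obtain q w where qw: "f = ?\<Phi> * q + smult (int p ^ n) w"
    using cong unfolding cyclo_cong_def by auto
  obtain q' r where qr: "pseudo_divmod w ?\<Phi> = (q', r)"
    by (cases "pseudo_divmod w ?\<Phi>")
  have w: "w = ?\<Phi> * q' + r"
    using pseudo_divmod(1)[OF \<Phi>0 qr] lc by simp
  have r: "coeff r k = 0" if "k \<ge> p - 1" for k
  proof -
    have "r = 0 \<or> degree r < degree ?\<Phi>" using pseudo_divmod(2)[OF \<Phi>0 qr] by simp
    then show ?thesis using that degree_cyclo_poly[of p] p by (auto intro: coeff_eq_0)
  qed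
  define F where "F = q + smult (int p ^ n) q'"
  have eq: "f - smult (int p ^ n) r = ?\<Phi> * F"
    unfolding F_def using qw w by (simp add: algebra_simps smult_add_right)
  have "F = 0"
  proof (rule ccontr)
    assume "F \<noteq> 0"
    then have "coeff (?\<Phi> * F) (degree ?\<Phi> + degree F) \<noteq> 0"
      using lc by (simp add: coeff_mult_degree_sum)
    moreover have "coeff (f - smult (int p ^ n) r) (degree ?\<Phi> + degree F) = 0"
      using low r degree_cyclo_poly[of p] p by simp
    ultimately show False using eq by simp
  qed
  with eq have "f = smult (int p ^ n) r" by simp
  then show ?thesis by simp
qed

lemma approx_poly_determines_coeff:
  assumes p: "p > 1" and c: "c \<in> Ocar p" and d: "d \<in> Ocar p"
    and cong: "cyclo_cong p n (approx_poly p n c) (approx_poly p n d)"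
  shows "c k n = d k n"
proof (cases "k < p - 1")
  case True
  have "int p ^ n dvd coeff (approx_poly p n c - approx_poly p n d) k"
    using cong by (intro cyclo_cong_zero_coeff_dvd[OF p])
      (simp_all add: coeff_approx_poly flip: cyclo_cong_iff_diff)
  then have "int p ^ n dvd c k n - d k n" using True by (simp add: coeff_approx_poly)
  moreover have "c k \<in> Zp p" "d k \<in> Zp p" using c d True by (auto intro: Ocar_D)
  ultimately show ?thesis by (metis Zp_D mod_eq_dvd_iff mod_pos_pos_trivial)
next
  case False
  then show ?thesis using Ocar_D(2)[OF c False] Ocar_D(2)[OF d False] by simp
qed

lemma Ocar_eqI:
  assumes "p > 1" "c \<in> Ocar p" "d \<in> Ocar p"
    "\<And>n. cyclo_cong p n (approx_poly p n c) (approx_poly p n d)"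
  shows "c = d"
  using approx_poly_determines_coeff[OF assms(1-3) assms(4)] by (auto simp: fun_eq_iff)

text \<open>\<open>f(\<theta>) c\<close>, by Horner's rule.\<close>

definition Opoly :: "nat \<Rightarrow> int poly \<Rightarrow> cyc \<Rightarrow> cyc" where
  "Opoly p f c = foldr (\<lambda>a acc. Oadd p (Osmult p (zofint p a) c) (Otheta p acc)) (coeffs f) Ozero"

lemma Opoly_Ocar:
  assumes "p > 1" "c \<in> Ocar p"
  shows "Opoly p f c \<in> Ocar p"
proof -
  have "foldr (\<lambda>a acc. Oadd p (Osmult p (zofint p a) c) (Otheta p acc)) as Ozero \<in> Ocar p" for as
    using assms
    by (induction as) (simp_all add: Ozero_Ocar Oadd_Ocar Osmult_Ocar zofint_Zp Otheta_Ocar)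
  then show ?thesis unfolding Opoly_def .
qed

lemma approx_poly_Opoly:
  assumes "p > 1"
  shows "cyclo_cong p n (approx_poly p n (Opoly p f c)) (f * approx_poly p n c)"
proof -
  have "cyclo_cong p n
      (approx_poly p n (foldr (\<lambda>a acc. Oadd p (Osmult p (zofint p a) c) (Otheta p acc)) as Ozero))
      (Poly as * approx_poly p n c)" for as
  proof (induction as)
    case (Cons a as)
    let ?acc = "foldr (\<lambda>a acc. Oadd p (Osmult p (zofint p a) c) (Otheta p acc)) as Ozero"
    have "cyclo_cong p n (approx_poly p n (Oadd p (Osmult p (zofint p a) c) (Otheta p ?acc)))
        (approx_poly p n (Osmult p (zofint p a) c) + approx_poly p n (Otheta p ?acc))"
      by (rule approx_poly_Oadd)
    also have "cyclo_cong p n \<dots> (smult a (approx_poly p n c) + [:0, 1:] * approx_poly p n ?acc)"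
      by (rule cyclo_cong_add[OF approx_poly_Osmult_zofint approx_poly_Otheta[OF assms]])
    also have "cyclo_cong p n \<dots> (smult a (approx_poly p n c) + [:0, 1:] * (Poly as * approx_poly p n c))"
      by (rule cyclo_cong_add[OF cyclo_cong_refl cyclo_cong_mult_left[OF Cons]])
    finally show ?case by simp
  qed simp
  then show ?thesis unfolding Opoly_def by (metis Poly_coeffs)
qed

section \<open>Completeness of \<open>O\<close> and units\<close>

lemma Ocar_complete:
  assumes p: "p > 1" and F: "\<And>L. F L \<in> Ocar p"
    and cauchy: "\<And>L. cyclo_cong p L (approx_poly p L (F (Suc L))) (approx_poly p L (F L))"
  shows "\<exists>c\<in>Ocar p. \<forall>n. approx_poly p n c = approx_poly p n (F n)"
proof
  define c where "c = (\<lambda>k n. F n k n)"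
  show "\<forall>n. approx_poly p n c = approx_poly p n (F n)"
    by (simp add: c_def approx_poly_def)
  show "c \<in> Ocar p"
  proof (rule OcarI)
    fix k
    assume k: "k < p - 1"
    have Z: "F n k \<in> Zp p" for n using Ocar_D(1)[OF F k] .
    have "F (Suc n) k n = F n k n" for n
      by (rule approx_poly_determines_coeff[OF p F F cauchy])
    then show "c k \<in> Zp p"
      using Zp_D[OF Z] unfolding Zp_def c_def by simp
  qed (simp add: c_def Ocar_D(2)[OF F] zzero_def fun_eq_iff)
qed

text \<open>If \<open>g f \<equiv> 1\<close> modulo the maximal ideal, the partial sums of \<open>g \<Sum> (1 - g f)\<^sup>k\<close> are
  compatible approximate inverses of \<open>f\<close>.\<close>

lemma cyclo_cong_approx_inverses:
  assumes unit: "cyclo_cong p 1 ((1 - g * f) ^ N) 0"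
  obtains G where "\<And>n. cyclo_cong p n (f * G n) 1" "\<And>n. cyclo_cong p n (G (Suc n)) (G n)"
proof -
  define r where "r = 1 - g * f"
  define G where "G n = g * (\<Sum>k<N * n. r ^ k)" for n
  have r_pow: "cyclo_cong p n (h * r ^ (N * n)) 0" for n h
    using cyclo_cong_mult_left[OF cyclo_cong_power[OF unit[folded r_def]], of n h]
    by (simp add: power_mult)
  have "f * G n = 1 + (- 1) * r ^ (N * n)" for n
    by (simp add: G_def one_diff_power_eq r_def algebra_simps)
  then have "cyclo_cong p n (f * G n) 1" for n
    using cyclo_cong_add_zero[OF r_pow[of n "- 1"], where f = 1] by simp
  moreover have "cyclo_cong p n (G (Suc n)) (G n)" for n
  proof -
    have "(\<Sum>k<m + l. r ^ k) = (\<Sum>k<m. r ^ k) + r ^ m * (\<Sum>k<l. r ^ k)" for m l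
      by (induction l) (simp_all add: algebra_simps power_add)
    from this[of "N * n" N] have "G (Suc n) = G n + (g * (\<Sum>k<N. r ^ k)) * r ^ (N * n)"
      by (simp add: G_def algebra_simps)
    then show ?thesis using cyclo_cong_add_zero[OF r_pow] by simp
  qed
  ultimately show thesis by (rule that)
qed

lemma Opoly_surj:
  assumes p: "p > 1" and unit: "cyclo_cong p 1 ((1 - g * f) ^ N) 0" and d: "d \<in> Ocar p"
  shows "\<exists>c\<in>Ocar p. Opoly p f c = d"
proof -
  obtain G where inverse: "\<And>n. cyclo_cong p n (f * G n) 1"
    and cauchy: "\<And>n. cyclo_cong p n (G (Suc n)) (G n)"
    using cyclo_cong_approx_inverses[OF unit] by blast
  let ?F = "\<lambda>n. Opoly p (G n) d"
  have "cyclo_cong p n (approx_poly p n (?F (Suc n))) (approx_poly p n (?F n))" for n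
  proof -
    have "cyclo_cong p n (approx_poly p n (?F (Suc n))) (G (Suc n) * approx_poly p n d)"
      by (rule approx_poly_Opoly[OF p])
    also have "cyclo_cong p n \<dots> (G n * approx_poly p n d)"
      by (rule cyclo_cong_mult_right[OF cauchy])
    also have "cyclo_cong p n \<dots> (approx_poly p n (?F n))"
      by (rule cyclo_cong_sym[OF approx_poly_Opoly[OF p]])
    finally show ?thesis .
  qed
  then obtain c where c: "c \<in> Ocar p" and lim: "\<And>n. approx_poly p n c = approx_poly p n (?F n)"
    using Ocar_complete[of p ?F, OF p Opoly_Ocar[OF p d]] by blast
  have "Opoly p f c = d"
  proof (rule Ocar_eqI[OF p Opoly_Ocar[OF p c] d])
    fix n
    have "cyclo_cong p n (approx_poly p n (Opoly p f c)) (f * approx_poly p n (?F n))"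
      using approx_poly_Opoly[OF p] lim by metis
    also have "cyclo_cong p n \<dots> (f * (G n * approx_poly p n d))"
      by (rule cyclo_cong_mult_left[OF approx_poly_Opoly[OF p]])
    also have "cyclo_cong p n \<dots> (1 * approx_poly p n d)"
      unfolding mult.assoc[symmetric] by (rule cyclo_cong_mult_right[OF inverse])
    finally show "cyclo_cong p n (approx_poly p n (Opoly p f c)) (approx_poly p n d)" by simp
  qed
  then show ?thesis using c by blast
qed

section \<open>\<open>\<pi>\<^sup>p\<^sup>-\<^sup>1O = pO\<close>\<close>

lemma smult_sum_right: "smult a (sum f S) = (\<Sum>x\<in>S. smult a (f x))"
  using sum_distrib_left[of "[:a:]" f S] by simp

definition cyclo_unit :: "nat \<Rightarrow> int poly" where
  "cyclo_unit p = (\<Sum>s<p - 1. smult (int ((p choose (s + 1)) div p)) ([:-1, 1:] ^ s))"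

text \<open>Expand \<open>X\<^sup>p = ((X - 1) + 1)\<^sup>p\<close> binomially and cancel \<open>X - 1\<close> from \<open>X\<^sup>p - 1 = (X - 1) \<Phi>\<^sub>p\<close>.\<close>

lemma cyclo_poly_eq:
  assumes "prime p"
  shows "[:-1, 1:] ^ (p - 1) + smult (int p) (cyclo_unit p) = cyclo_poly p"
proof -
  have p1: "p > 1" using assms prime_gt_1_nat by blast
  define Y :: "int poly" where "Y = [:-1, 1:]"
  define G where "G = (\<Sum>s<p. of_nat (p choose (s + 1)) * Y ^ s)"
  have X: "[:0, 1:] - 1 = Y" by (simp add: Y_def one_pCons)
  then have "[:0, 1:] ^ p = (Y + 1) ^ p" by (metis diff_add_cancel)
  also have "\<dots> = (\<Sum>s\<le>p. of_nat (p choose s) * Y ^ s)"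
    by (simp add: binomial_ring)
  also have "\<dots> = 1 + (\<Sum>s\<le>p - 1. of_nat (p choose (Suc s)) * Y ^ Suc s)"
    using sum.atMost_Suc_shift[of "\<lambda>s. of_nat (p choose s) * Y ^ s" "p - 1"] p1 by simp
  also have "(\<Sum>s\<le>p - 1. of_nat (p choose (Suc s)) * Y ^ Suc s) = Y * G"
    unfolding G_def sum_distrib_left by (rule sum.cong) (use p1 in \<open>auto simp: ac_simps\<close>)
  finally have "[:0, 1:] ^ p - 1 = Y * G" by simp
  moreover have "[:0, 1:] ^ p - 1 = Y * cyclo_poly p"
    unfolding cyclo_poly_eq_geometric_sum power_diff_1_eq X ..
  moreover have "Y \<noteq> 0" by (simp add: Y_def)
  ultimately have \<Phi>: "cyclo_poly p = G"
    by (metis mult_left_cancel)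
  have "G = (\<Sum>s<p - 1. of_nat (p choose (s + 1)) * Y ^ s) + Y ^ (p - 1)"
    unfolding G_def using sum.lessThan_Suc[of "\<lambda>s. of_nat (p choose (s + 1)) * Y ^ s" "p - 1"] p1
    by simp
  also have "(\<Sum>s<p - 1. of_nat (p choose (s + 1)) * Y ^ s) = smult (int p) (cyclo_unit p)"
    unfolding cyclo_unit_def smult_sum_right Y_def
  proof (rule sum.cong)
    fix s
    assume "s \<in> {..<p - 1}"
    then have "p dvd (p choose (s + 1))"
      using assms by (intro dvd_choose_prime) auto
    then have "int (p choose (s + 1)) = int p * int ((p choose (s + 1)) div p)"
      by (metis dvd_mult_div_cancel of_nat_mult)
    then show "of_nat (p choose (s + 1)) * [:-1, 1:] ^ s
      = smult (int p) (smult (int ((p choose (s + 1)) div p)) ([:-1, 1:] ^ s))"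
      by (simp add: of_nat_poly)
  qed simp
  finally show ?thesis using \<Phi> by (simp add: Y_def)
qed

lemma one_minus_cyclo_unit_nilpotent:
  assumes "prime p"
  shows "cyclo_cong p 1 ((1 - cyclo_unit p) ^ (p - 1)) 0"
proof -
  have p1: "p > 1" using assms prime_gt_1_nat by blast
  have "poly (cyclo_unit p) 1 = (\<Sum>s<p - 1. int ((p choose (s + 1)) div p) * 0 ^ s)"
    by (simp add: cyclo_unit_def poly_sum)
  also have "\<dots> = (\<Sum>s\<in>{0}. int ((p choose (s + 1)) div p) * 0 ^ s)"
    by (rule sum.mono_neutral_right) (use p1 in auto)
  also have "\<dots> = 1" using p1 by simp
  finally have "[:-1, 1:] dvd 1 - cyclo_unit p"
    by (simp add: poly_eq_0_iff_dvd[symmetric])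
  then obtain h where h: "1 - cyclo_unit p = [:-1, 1:] * h" ..
  have "(1 - cyclo_unit p) ^ (p - 1) = [:-1, 1:] ^ (p - 1) * h ^ (p - 1)"
    by (simp only: h power_mult_distrib)
  also have "\<dots> = cyclo_poly p * h ^ (p - 1) + smult (int p) (- cyclo_unit p * h ^ (p - 1))"
    by (simp add: cyclo_poly_eq[OF assms, symmetric] algebra_simps)
  finally show ?thesis unfolding cyclo_cong_def by (metis diff_zero power_one_right)
qed

definition Oscale :: "nat \<Rightarrow> nat \<Rightarrow> cyc \<Rightarrow> cyc" where
  "Oscale p k = Osmult p (zofint p (int p ^ k))"

lemma Oscale_Ocar: "p > 0 \<Longrightarrow> c \<in> Ocar p \<Longrightarrow> Oscale p k c \<in> Ocar p"
  by (simp add: Oscale_def Osmult_Ocar zofint_Zp)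

lemma Oscale_Oscale: "Oscale p a (Oscale p b c) = Oscale p (a + b) c"
  by (simp add: Oscale_def Osmult_Osmult zofint_mult power_add)

lemma approx_poly_Oscale:
  "cyclo_cong p n (approx_poly p n (Oscale p k c)) (smult (int p ^ k) (approx_poly p n c))"
  unfolding Oscale_def by (rule approx_poly_Osmult_zofint)

lemma Oscale_0:
  assumes "p > 1" "c \<in> Ocar p"
  shows "Oscale p 0 c = c"
  using assms approx_poly_Oscale[of p _ 0 c] by (intro Ocar_eqI) (simp_all add: Oscale_Ocar)

lemma Oscale_0_Pideal: "p > 1 \<Longrightarrow> x \<in> Pideal p m \<Longrightarrow> Oscale p 0 x = x"
  using Oscale_0 Pideal_subset_Ocar by blast

lemma inj_on_Oscale:
  assumes "p > 1"
  shows "inj_on (Oscale p a) (Ocar p)"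
proof
  fix c d
  assume c: "c \<in> Ocar p" and d: "d \<in> Ocar p" and eq: "Oscale p a c = Oscale p a d"
  have "c k n = d k n" for k n
  proof (cases "k < p - 1")
    case True
    have "zmul p (zofint p (int p ^ a)) (c k) (n + a) = zmul p (zofint p (int p ^ a)) (d k) (n + a)"
      using fun_cong[OF eq[unfolded Oscale_def Osmult_def], of k] by simp
    then have "(int p ^ a * c k (n + a)) mod (int p ^ a * int p ^ n)
        = (int p ^ a * d k (n + a)) mod (int p ^ a * int p ^ n)"
      unfolding zmul_def zofint_def power_add mult.commute[of "int p ^ n"] by (simp only: mod_mult_left_eq)
    then have "int p ^ a * (c k (n + a) mod int p ^ n) = int p ^ a * (d k (n + a) mod int p ^ n)"
      by (simp only: mod_mult_mult1)
    then have "c k (n + a) mod int p ^ n = d k (n + a) mod int p ^ n"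
      using assms by simp
    then show ?thesis
      using Zp_mod_le[of _ p n "n + a"] Ocar_D(1)[OF c True] Ocar_D(1)[OF d True] by simp
  next
    case False
    then show ?thesis using Ocar_D(2)[OF c False] Ocar_D(2)[OF d False] by simp
  qed
  then show "c = d" by (simp add: fun_eq_iff)
qed

lemma Opi_pow_p_minus_1:
  assumes "prime p" "c \<in> Ocar p"
  shows "(Opi p ^^ (p - 1)) c = Oscale p 1 (Opoly p (- cyclo_unit p) c)"
proof -
  have p: "p > 1" using assms(1) prime_gt_1_nat by blast
  show ?thesis
  proof (rule Ocar_eqI[OF p])
    show "(Opi p ^^ (p - 1)) c \<in> Ocar p" "Oscale p 1 (Opoly p (- cyclo_unit p) c) \<in> Ocar p"
      using assms(2) p by (simp_all add: Opi_pow_Ocar Oscale_Ocar Opoly_Ocar)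
    fix n
    let ?a = "approx_poly p n c"
    have "cyclo_cong p n (approx_poly p n ((Opi p ^^ (p - 1)) c)) ([:-1, 1:] ^ (p - 1) * ?a)"
      by (rule approx_poly_Opi_pow[OF p])
    also have "[:-1, 1:] ^ (p - 1) * ?a = cyclo_poly p * ?a + smult (int p) (- cyclo_unit p * ?a)"
      by (simp add: cyclo_poly_eq[OF assms(1), symmetric] algebra_simps)
    also have "cyclo_cong p n \<dots> (smult (int p) (- cyclo_unit p * ?a))"
      by (rule cyclo_cong_cyclo_poly_add)
    also have "cyclo_cong p n \<dots> (smult (int p) (approx_poly p n (Opoly p (- cyclo_unit p) c)))"
      by (rule cyclo_cong_smult[OF cyclo_cong_sym[OF approx_poly_Opoly[OF p]]])
    also have "cyclo_cong p n \<dots> (approx_poly p n (Oscale p 1 (Opoly p (- cyclo_unit p) c)))"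
      using cyclo_cong_sym[OF approx_poly_Oscale[of p n 1]] by simp
    finally show "cyclo_cong p n (approx_poly p n ((Opi p ^^ (p - 1)) c))
        (approx_poly p n (Oscale p 1 (Opoly p (- cyclo_unit p) c)))" .
  qed
qed

lemma Opoly_cyclo_unit_image:
  assumes "prime p"
  shows "Opoly p (- cyclo_unit p) ` Ocar p = Ocar p"
proof -
  have p: "p > 1" using assms prime_gt_1_nat by blast
  have "cyclo_cong p 1 ((1 - (- 1) * (- cyclo_unit p)) ^ (p - 1)) 0"
    using one_minus_cyclo_unit_nilpotent[OF assms] by simp
  then have "d \<in> Opoly p (- cyclo_unit p) ` Ocar p" if "d \<in> Ocar p" for d
    using Opoly_surj[OF p _ that] by (metis image_eqI)
  then show ?thesis using Opoly_Ocar[OF p] by blast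
qed

lemma Pideal_add_p_minus_1:
  assumes "prime p"
  shows "Pideal p (m + (p - 1)) = Oscale p 1 ` Pideal p m"
proof -
  have "Pideal p (m + (p - 1)) = (Opi p ^^ m) ` (Opi p ^^ (p - 1)) ` Ocar p"
    by (simp add: Pideal_def funpow_add image_comp)
  also have "(Opi p ^^ (p - 1)) ` Ocar p = Oscale p 1 ` Opoly p (- cyclo_unit p) ` Ocar p"
    using Opi_pow_p_minus_1[OF assms] by (simp add: image_image)
  also have "\<dots> = Oscale p 1 ` Ocar p"
    by (simp add: Opoly_cyclo_unit_image[OF assms])
  also have "(Opi p ^^ m) ` Oscale p 1 ` Ocar p = Oscale p 1 ` Pideal p m"
    by (simp add: Pideal_def image_image Oscale_def Osmult_Opi_pow)
  finally show ?thesis .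
qed

lemma Pideal_shift:
  assumes "prime p"
  shows "Pideal p (m + q * (p - 1)) = Oscale p q ` Pideal p m"
proof (induction q)
  case 0
  have "p > 1" using assms prime_gt_1_nat by blast
  then show ?case using Oscale_0_Pideal[of p _ m] by simp
next
  case (Suc q)
  have "m + Suc q * (p - 1) = (m + q * (p - 1)) + (p - 1)"
    by simp
  then have "Pideal p (m + Suc q * (p - 1)) = Pideal p ((m + q * (p - 1)) + (p - 1))"
    by (rule arg_cong)
  also have "\<dots> = Oscale p 1 ` Oscale p q ` Pideal p m"
    unfolding Pideal_add_p_minus_1[OF assms] Suc ..
  finally show ?case by (simp add: image_image Oscale_Oscale)
qed

lemma Pideal_shift_double:
  assumes "prime p"
  shows "Oscale p (2 * q) ` Pideal p (2 * m + 1) = Pideal p (2 * (m + q * (p - 1)) + 1)"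
proof -
  have m: "2 * (m + q * (p - 1)) + 1 = (2 * m + 1) + (2 * q) * (p - 1)" by simp
  show ?thesis unfolding m Pideal_shift[OF assms] ..
qed

section \<open>Transport of \<open>Hhat\<close> along module isomorphisms\<close>

definition Osubmodule :: "nat \<Rightarrow> cyc set \<Rightarrow> bool" where
  "Osubmodule p M \<longleftrightarrow> Ozero \<in> M \<and> (\<forall>x\<in>M. \<forall>y\<in>M. Oadd p x y \<in> M)
     \<and> (\<forall>s\<in>Zp p. \<forall>x\<in>M. Osmult p s x \<in> M) \<and> (\<forall>x\<in>M. Otheta p x \<in> M)"

definition Ohom_on :: "nat \<Rightarrow> cyc set \<Rightarrow> (cyc \<Rightarrow> cyc) \<Rightarrow> bool" where
  "Ohom_on p M f \<longleftrightarrow> (\<forall>x\<in>M. \<forall>y\<in>M. f (Oadd p x y) = Oadd p (f x) (f y))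
     \<and> (\<forall>s\<in>Zp p. \<forall>x\<in>M. f (Osmult p s x) = Osmult p s (f x))
     \<and> (\<forall>x\<in>M. f (Otheta p x) = Otheta p (f x))"

lemma Osubmodule_Pideal:
  assumes "p > 1"
  shows "Osubmodule p (Pideal p j)"
proof -
  have add: "Oadd p x y \<in> Pideal p j" if "x \<in> Pideal p j" "y \<in> Pideal p j" for x y
    using that assms unfolding Pideal_def by (auto simp: Opi_pow_Oadd[symmetric] Oadd_Ocar)
  have smult: "Osmult p s x \<in> Pideal p j" if "s \<in> Zp p" "x \<in> Pideal p j" for s x
    using that assms unfolding Pideal_def by (auto simp: Osmult_Opi_pow Osmult_Ocar)
  have "(Opi p ^^ j) Ozero \<in> Pideal p j"
    unfolding Pideal_def using assms by (simp add: Ozero_Ocar)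
  then have "Ozero \<in> Pideal p j"
    using smult[OF zzero_Zp] assms by (metis Osmult_zzero less_trans zero_less_one)
  moreover have "Otheta p x \<in> Pideal p j" if "x \<in> Pideal p j" for x
    using that assms unfolding Pideal_def by (auto simp: Otheta_Opi_pow Otheta_Ocar)
  ultimately show ?thesis
    unfolding Osubmodule_def using add smult by blast
qed

lemma Ohom_on_Ozero:
  assumes "p > 0" "Ohom_on p M f" "Ozero \<in> M"
  shows "f Ozero = Ozero"
  using assms zzero_Zp[of p] unfolding Ohom_on_def by (metis Osmult_zzero)

lemma Ohom_on_the_inv_into:
  assumes hom: "Ohom_on p M f" and inj: "inj_on f M" and M: "Osubmodule p M"
  shows "Ohom_on p (f ` M) (the_inv_into M f)"
proof -
  have inv: "the_inv_into M f (f x) = x" if "x \<in> M" for x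
    using the_inv_into_f_f[OF inj that] .
  show ?thesis
    unfolding Ohom_on_def
  proof (intro conjI ballI)
    fix x y
    assume "x \<in> f ` M" "y \<in> f ` M"
    then obtain u v where "u \<in> M" "v \<in> M" "x = f u" "y = f v" by blast
    then show "the_inv_into M f (Oadd p x y) = Oadd p (the_inv_into M f x) (the_inv_into M f y)"
      using hom M inv unfolding Ohom_on_def Osubmodule_def by metis
  next
    fix s x
    assume "s \<in> Zp p" "x \<in> f ` M"
    then obtain u where "u \<in> M" "x = f u" by blast
    then show "the_inv_into M f (Osmult p s x) = Osmult p s (the_inv_into M f x)"
      using hom M inv \<open>s \<in> Zp p\<close> unfolding Ohom_on_def Osubmodule_def by metis
  next
    fix x
    assume "x \<in> f ` M"
    then obtain u where "u \<in> M" "x = f u" by blast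
    then show "the_inv_into M f (Otheta p x) = Otheta p (the_inv_into M f x)"
      using hom M inv unfolding Ohom_on_def Osubmodule_def by metis
  qed
qed

definition Olincomb :: "nat \<Rightarrow> (zp \<times> cyc) list \<Rightarrow> cyc" where
  "Olincomb p xs = foldr (\<lambda>(s, x) acc. Oadd p (Osmult p s x) acc) xs Ozero"

lemma Ospan_eq_Olincomb:
  "Ospan p S = {Olincomb p xs | xs. set (map fst xs) \<subseteq> Zp p \<and> set (map snd xs) \<subseteq> S}"
  unfolding Ospan_def Olincomb_def by blast

lemma Ohom_on_Olincomb:
  assumes p: "p > 0" and hom: "Ohom_on p M f" and M: "Osubmodule p M"
    and xs: "set (map fst xs) \<subseteq> Zp p" "set (map snd xs) \<subseteq> M"
  shows "Olincomb p xs \<in> M \<and> f (Olincomb p xs) = Olincomb p (map (apsnd f) xs)"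
  using xs
proof (induction xs)
  case Nil
  then show ?case
    using M Ohom_on_Ozero[OF p hom] by (simp add: Olincomb_def Osubmodule_def)
next
  case (Cons sx xs)
  then show ?case
    using hom M unfolding Ohom_on_def Osubmodule_def by (auto simp: Olincomb_def split: prod.split)
qed

lemma Ospan_image:
  assumes p: "p > 0" and hom: "Ohom_on p M f" and M: "Osubmodule p M" and S: "S \<subseteq> M"
  shows "f ` Ospan p S = Ospan p (f ` S)"
proof
  note lincomb = Ohom_on_Olincomb[OF p hom M]
  show "f ` Ospan p S \<subseteq> Ospan p (f ` S)"
  proof
    fix z
    assume "z \<in> f ` Ospan p S"
    then obtain xs where xs: "set (map fst xs) \<subseteq> Zp p" "set (map snd xs) \<subseteq> S"
      and z: "z = f (Olincomb p xs)"
      unfolding Ospan_eq_Olincomb by blast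
    have "z = Olincomb p (map (apsnd f) xs)" using lincomb xs S z by blast
    moreover have "set (map snd (map (apsnd f) xs)) \<subseteq> f ` S" using xs(2) by auto
    ultimately show "z \<in> Ospan p (f ` S)" unfolding Ospan_eq_Olincomb using xs(1) by force
  qed
  show "Ospan p (f ` S) \<subseteq> f ` Ospan p S"
  proof
    fix z
    assume "z \<in> Ospan p (f ` S)"
    then obtain ys where ys: "set (map fst ys) \<subseteq> Zp p" "set (map snd ys) \<subseteq> f ` S"
      and z: "z = Olincomb p ys"
      unfolding Ospan_eq_Olincomb by blast
    define xs where "xs = map (apsnd (inv_into S f)) ys"
    have xs: "set (map fst xs) \<subseteq> Zp p" "set (map snd xs) \<subseteq> S"
      using ys by (auto simp: xs_def inv_into_into)
    have "map (apsnd f) xs = ys"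
      using ys(2) by (auto simp: xs_def f_inv_into_f intro!: map_idI)
    then have "z = f (Olincomb p xs)" using lincomb xs S z by auto
    then show "z \<in> f ` Ospan p S" unfolding Ospan_eq_Olincomb using xs by blast
  qed
qed

lemma Hhat_transport:
  assumes p: "p > 1" and \<gamma>: "\<gamma> \<in> Hhat p i"
    and \<sigma>: "bij_betw \<sigma> (Pideal p j) (Pideal p i)" "Ohom_on p (Pideal p j) \<sigma>"
    and \<tau>: "bij_betw \<tau> (Pideal p (2 * i + 1)) (Pideal p (2 * j + 1))"
      "Ohom_on p (Pideal p (2 * i + 1)) \<tau>"
  shows "(\<lambda>x y. \<tau> (\<gamma> (\<sigma> x) (\<sigma> y))) \<in> Hhat p j"
proof -
  let ?Pi = "Pideal p i" and ?Pj = "Pideal p j" and ?Qi = "Pideal p (2 * i + 1)"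
  have \<sigma>_in: "\<sigma> x \<in> ?Pi" if "x \<in> ?Pj" for x using \<sigma>(1) that by (rule bij_betw_apply)
  have \<gamma>_in: "\<gamma> u v \<in> ?Qi" if "u \<in> ?Pi" "v \<in> ?Pi" for u v using \<gamma> that by (simp add: Hhat_def)
  have Mj: "Osubmodule p ?Pj" and Mi: "Osubmodule p ?Pi" and MQ: "Osubmodule p ?Qi"
    using p by (simp_all add: Osubmodule_Pideal)
  have \<tau>0: "\<tau> Ozero = Ozero"
    using Ohom_on_Ozero[OF _ \<tau>(2)] MQ p by (simp add: Osubmodule_def)
  note linearity = \<sigma>_in \<gamma>_in \<sigma>(2) \<tau>(2) Mj Mi MQ \<gamma>[unfolded Hhat_def]
  let ?G = "(\<lambda>(u, v). \<gamma> u v) ` (?Pi \<times> ?Pi)"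
  have "(\<lambda>(x, y). \<tau> (\<gamma> (\<sigma> x) (\<sigma> y))) ` (?Pj \<times> ?Pj)
      = \<tau> ` (\<lambda>(u, v). \<gamma> u v) ` map_prod \<sigma> \<sigma> ` (?Pj \<times> ?Pj)"
    by (simp add: image_image case_prod_unfold)
  also have "map_prod \<sigma> \<sigma> ` (?Pj \<times> ?Pj) = ?Pi \<times> ?Pi"
    by (intro map_prod_surj_on bij_betw_imp_surj_on[OF \<sigma>(1)])
  finally have "(\<lambda>(x, y). \<tau> (\<gamma> (\<sigma> x) (\<sigma> y))) ` (?Pj \<times> ?Pj) = \<tau> ` ?G" .
  moreover have "?G \<subseteq> ?Qi" using \<gamma>_in by auto
  ultimately have "Ospan p ((\<lambda>(x, y). \<tau> (\<gamma> (\<sigma> x) (\<sigma> y))) ` (?Pj \<times> ?Pj)) = \<tau> ` Ospan p ?G"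
    using Ospan_image[OF _ \<tau>(2) MQ] p by simp
  also have "\<dots> = Pideal p (2 * j + 1)"
    using \<gamma> bij_betw_imp_surj_on[OF \<tau>(1)] by (simp add: Hhat_def)
  finally show ?thesis
    unfolding Hhat_def
    using bij_betw_apply[OF \<tau>(1)] linearity \<tau>0
    by (simp add: Ohom_on_def Osubmodule_def)
qed

section \<open>Rescaling by powers of \<open>p\<close>\<close>

lemma Ohom_on_Oscale: "Ohom_on p M (Oscale p k)"
  by (simp add: Ohom_on_def Oscale_def Osmult_Oadd Osmult_commute Osmult_Otheta)

lemma inj_on_Oscale_Pideal: "p > 1 \<Longrightarrow> inj_on (Oscale p k) (Pideal p m)"
  using inj_on_Oscale Pideal_subset_Ocar by (rule inj_on_subset)

lemma bij_betw_Oscale_Pideal: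
  assumes "p > 1" "Oscale p k ` Pideal p m = Pideal p n"
  shows "bij_betw (Oscale p k) (Pideal p m) (Pideal p n)"
  unfolding bij_betw_def using inj_on_Oscale_Pideal[OF assms(1)] assms(2) by blast

lemma Oscale_inverse_Pideal:
  assumes p: "p > 1" and image: "Oscale p k ` Pideal p m = Pideal p n"
  defines "\<sigma> \<equiv> the_inv_into (Pideal p m) (Oscale p k)"
  shows "bij_betw \<sigma> (Pideal p n) (Pideal p m)" and "Ohom_on p (Pideal p n) \<sigma>"
    and "\<And>x. x \<in> Pideal p n \<Longrightarrow> Oscale p k (\<sigma> x) = x"
proof -
  show "bij_betw \<sigma> (Pideal p n) (Pideal p m)"
    unfolding \<sigma>_def by (rule bij_betw_the_inv_into[OF bij_betw_Oscale_Pideal[OF assms(1,2)]])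
  show "Ohom_on p (Pideal p n) \<sigma>"
    unfolding \<sigma>_def image[symmetric]
    by (rule Ohom_on_the_inv_into[OF Ohom_on_Oscale inj_on_Oscale_Pideal[OF p] Osubmodule_Pideal[OF p]])
  show "Oscale p k (\<sigma> x) = x" if "x \<in> Pideal p n" for x
    unfolding \<sigma>_def using f_the_inv_into_f[OF inj_on_Oscale_Pideal[OF p]] that image by blast
qed

lemma Oscale_Pideal: "p > 1 \<Longrightarrow> x \<in> Pideal p m \<Longrightarrow> Oscale p k x \<in> Pideal p m"
  using Osubmodule_Pideal zofint_Zp by (simp add: Osubmodule_def Oscale_def)

lemma Hhat_Oscale:
  assumes p: "p > 1" and \<gamma>: "\<gamma> \<in> Hhat p i" and uv: "u \<in> Pideal p i" "v \<in> Pideal p i"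
  shows "\<gamma> (Oscale p k u) (Oscale p k v) = Oscale p (2 * k) (\<gamma> u v)"
proof -
  have s: "zofint p (int p ^ k) \<in> Zp p" using p by (simp add: zofint_Zp)
  have "\<gamma> (Oscale p k u) (Oscale p k v) = Oscale p k (\<gamma> u (Oscale p k v))"
    using \<gamma> s uv Oscale_Pideal[OF p] by (simp add: Hhat_def Oscale_def)
  also have "\<gamma> u (Oscale p k v) = Oscale p k (\<gamma> u v)"
    using \<gamma> s uv by (simp add: Hhat_def Oscale_def)
  finally show ?thesis by (simp add: Oscale_Oscale mult_2)
qed

text \<open>On \<open>\<pi>\<^sup>jO\<close> the \<open>\<bbbQ>\<^sub>p\<close>-bilinear extension of \<open>\<gamma>\<close> is \<open>(x, y) \<mapsto> p\<^sup>-\<^sup>2\<^sup>k \<gamma>(p\<^sup>k x, p\<^sup>k y)\<close>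
  for any \<open>k\<close> with \<open>p\<^sup>k x, p\<^sup>k y \<in> \<pi>\<^sup>iO\<close>.\<close>

definition agrees_with_extension ::
    "nat \<Rightarrow> nat \<Rightarrow> (cyc \<Rightarrow> cyc \<Rightarrow> cyc) \<Rightarrow> nat \<Rightarrow> (cyc \<Rightarrow> cyc \<Rightarrow> cyc) \<Rightarrow> bool" where
  "agrees_with_extension p i \<gamma> j \<delta> \<longleftrightarrow>
     (\<forall>x\<in>Pideal p j. \<forall>y\<in>Pideal p j. \<forall>k.
        Oscale p k x \<in> Pideal p i \<longrightarrow> Oscale p k y \<in> Pideal p i \<longrightarrow>
        Oscale p (2 * k) (\<delta> x y) = \<gamma> (Oscale p k x) (Oscale p k y))"

lemma agrees_with_extensionI:
  assumes p: "p > 1" and \<gamma>: "\<gamma> \<in> Hhat p i"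
    and u: "\<And>x. x \<in> Pideal p j \<Longrightarrow> u x \<in> Pideal p i"
      "\<And>x. x \<in> Pideal p j \<Longrightarrow> Oscale p a x = Oscale p b (u x)"
    and \<delta>: "\<And>x y. x \<in> Pideal p j \<Longrightarrow> y \<in> Pideal p j \<Longrightarrow> \<delta> x y \<in> Ocar p"
      "\<And>x y. x \<in> Pideal p j \<Longrightarrow> y \<in> Pideal p j \<Longrightarrow>
        Oscale p (2 * a) (\<delta> x y) = Oscale p (2 * b) (\<gamma> (u x) (u y))"
  shows "agrees_with_extension p i \<gamma> j \<delta>"
  unfolding agrees_with_extension_def
proof (intro ballI allI impI)
  fix x y k
  assume xy: "x \<in> Pideal p j" "y \<in> Pideal p j"
    and kxy: "Oscale p k x \<in> Pideal p i" "Oscale p k y \<in> Pideal p i"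
  have uxy: "u x \<in> Pideal p i" "u y \<in> Pideal p i" using u(1) xy by auto
  have commute: "Oscale p m (Oscale p n z) = Oscale p n (Oscale p m z)" for m n z
    by (simp add: Oscale_Oscale add.commute)
  have "Oscale p (2 * a) (Oscale p (2 * k) (\<delta> x y))
      = Oscale p (2 * k) (Oscale p (2 * b) (\<gamma> (u x) (u y)))"
    by (simp only: commute[of "2 * a"] \<delta>(2)[OF xy])
  also have "\<dots> = Oscale p (2 * b) (\<gamma> (Oscale p k (u x)) (Oscale p k (u y)))"
    by (simp only: commute[of "2 * k"] Hhat_Oscale[OF p \<gamma> uxy])
  also have "\<dots> = \<gamma> (Oscale p k (Oscale p b (u x))) (Oscale p k (Oscale p b (u y)))"
    using Hhat_Oscale[OF p \<gamma> Oscale_Pideal[OF p uxy(1)] Oscale_Pideal[OF p uxy(2)]]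
    by (simp only: commute[of k])
  also have "\<dots> = Oscale p (2 * a) (\<gamma> (Oscale p k x) (Oscale p k y))"
    by (simp only: u(2)[OF xy(1), symmetric] u(2)[OF xy(2), symmetric] commute[of k a]
        Hhat_Oscale[OF p \<gamma> kxy])
  finally have "Oscale p (2 * a) (Oscale p (2 * k) (\<delta> x y))
      = Oscale p (2 * a) (\<gamma> (Oscale p k x) (Oscale p k y))" .
  moreover have "Oscale p (2 * k) (\<delta> x y) \<in> Ocar p"
    using \<delta>(1)[OF xy] p by (simp add: Oscale_Ocar)
  moreover have "\<gamma> (Oscale p k x) (Oscale p k y) \<in> Ocar p"
    using \<gamma> kxy Pideal_subset_Ocar[OF p] by (auto simp: Hhat_def)
  ultimately show "Oscale p (2 * k) (\<delta> x y) = \<gamma> (Oscale p k x) (Oscale p k y)"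
    using inj_on_Oscale[OF p] by (meson inj_onD)
qed

lemma Hhat_lift:
  fixes p i q :: nat
  assumes "prime p" and \<gamma>: "\<gamma> \<in> Hhat p i"
  defines "j \<equiv> i + q * (p - 1)"
  shows "\<exists>\<delta>\<in>Hhat p j. agrees_with_extension p i \<gamma> j \<delta>"
proof -
  have p: "p > 1" using assms(1) prime_gt_1_nat by blast
  define \<sigma> where "\<sigma> = the_inv_into (Pideal p i) (Oscale p q)"
  define \<delta> where "\<delta> x y = Oscale p (2 * q) (\<gamma> (\<sigma> x) (\<sigma> y))" for x y
  have Pj: "Oscale p q ` Pideal p i = Pideal p j"
    unfolding j_def Pideal_shift[OF assms(1)] ..
  note \<sigma> = Oscale_inverse_Pideal[OF p Pj, folded \<sigma>_def]
  have \<delta>_Hhat: "\<delta> \<in> Hhat p j"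
    unfolding \<delta>_def using Pideal_shift_double[OF assms(1)]
    by (intro Hhat_transport[OF p \<gamma> \<sigma>(1,2) _ Ohom_on_Oscale] bij_betw_Oscale_Pideal[OF p])
      (simp add: j_def)
  have "agrees_with_extension p i \<gamma> j \<delta>"
  proof (rule agrees_with_extensionI[where a = 0 and b = q, OF p \<gamma>])
    show "\<sigma> x \<in> Pideal p i" if "x \<in> Pideal p j" for x
      using bij_betw_apply[OF \<sigma>(1) that] .
    show "Oscale p 0 x = Oscale p q (\<sigma> x)" if "x \<in> Pideal p j" for x
      using that \<sigma>(3) Oscale_0_Pideal[OF p] by simp
    show "\<delta> x y \<in> Ocar p" if "x \<in> Pideal p j" "y \<in> Pideal p j" for x y
      using \<delta>_Hhat that Pideal_subset_Ocar[OF p] by (auto simp: Hhat_def)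
    then show "Oscale p (2 * 0) (\<delta> x y) = Oscale p (2 * q) (\<gamma> (\<sigma> x) (\<sigma> y))"
      if "x \<in> Pideal p j" "y \<in> Pideal p j" for x y
      using that Oscale_0[OF p] by (simp add: \<delta>_def)
  qed
  with \<delta>_Hhat show ?thesis by blast
qed

lemma Hhat_descend:
  fixes p j q :: nat
  assumes "prime p"
  defines "i \<equiv> j + q * (p - 1)"
  assumes \<gamma>: "\<gamma> \<in> Hhat p i"
  shows "\<exists>\<delta>\<in>Hhat p j. agrees_with_extension p i \<gamma> j \<delta>"
proof -
  have p: "p > 1" using assms(1) prime_gt_1_nat by blast
  define \<tau> where "\<tau> = the_inv_into (Pideal p (2 * j + 1)) (Oscale p (2 * q))"
  define \<delta> where "\<delta> x y = \<tau> (\<gamma> (Oscale p q x) (Oscale p q y))" for x y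
  have Pi: "Oscale p q ` Pideal p j = Pideal p i"
    unfolding i_def Pideal_shift[OF assms(1)] ..
  have "Oscale p (2 * q) ` Pideal p (2 * j + 1) = Pideal p (2 * i + 1)"
    unfolding i_def by (rule Pideal_shift_double[OF assms(1)])
  note \<tau> = Oscale_inverse_Pideal[OF p this, folded \<tau>_def]
  have \<delta>_Hhat: "\<delta> \<in> Hhat p j"
    unfolding \<delta>_def
    by (rule Hhat_transport[OF p \<gamma> bij_betw_Oscale_Pideal[OF p Pi] Ohom_on_Oscale \<tau>(1,2)])
  have "agrees_with_extension p i \<gamma> j \<delta>"
  proof (rule agrees_with_extensionI[where a = q and b = 0, OF p \<gamma>])
    show qx: "Oscale p q x \<in> Pideal p i" if "x \<in> Pideal p j" for x
      using that Pi by blast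
    show "Oscale p q x = Oscale p 0 (Oscale p q x)" if "x \<in> Pideal p j" for x
      using qx[OF that] Oscale_0_Pideal[OF p] by simp
    show "\<delta> x y \<in> Ocar p" if "x \<in> Pideal p j" "y \<in> Pideal p j" for x y
      using \<delta>_Hhat that Pideal_subset_Ocar[OF p] by (auto simp: Hhat_def)
    show "Oscale p (2 * q) (\<delta> x y) = Oscale p (2 * 0) (\<gamma> (Oscale p q x) (Oscale p q y))"
      if "x \<in> Pideal p j" "y \<in> Pideal p j" for x y
    proof -
      have "\<gamma> (Oscale p q x) (Oscale p q y) \<in> Pideal p (2 * i + 1)"
        using \<gamma> qx that by (simp add: Hhat_def)
      then show ?thesis using \<tau>(3) Oscale_0_Pideal[OF p] by (simp add: \<delta>_def)
    qed
  qed
  with \<delta>_Hhat show ?thesis by blast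
qed

theorem lemma2p2:
  fixes p i j :: nat and \<gamma> :: "cyc \<Rightarrow> cyc \<Rightarrow> cyc"
  assumes "prime p" and "odd p"
    and "\<gamma> \<in> Hhat p i"
    and "[j = i] (mod (p - 1))"
  shows "\<exists>\<delta>\<in>Hhat p j. \<forall>x\<in>Pideal p j. \<forall>y\<in>Pideal p j. \<forall>k::nat.
           Osmult p (zofint p (int p ^ k)) x \<in> Pideal p i \<longrightarrow>
           Osmult p (zofint p (int p ^ k)) y \<in> Pideal p i \<longrightarrow>
           Osmult p (zofint p (int p ^ (2 * k))) (\<delta> x y)
             = \<gamma> (Osmult p (zofint p (int p ^ k)) x) (Osmult p (zofint p (int p ^ k)) y)"
proof -
  \<comment> \<open>The argument does not need \<open>p\<close> to be odd.\<close>
  have "\<exists>\<delta>\<in>Hhat p j. agrees_with_extension p i \<gamma> j \<delta>"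
  proof (cases "i \<le> j")
    case True
    then obtain q where "j = q * (p - 1) + i"
      using cong_le_nat assms(4) by blast
    then show ?thesis using Hhat_lift[OF assms(1,3), where q = q] by (simp add: add.commute)
  next
    case False
    then obtain q where "i = q * (p - 1) + j"
      using cong_le_nat[of j i] cong_sym[OF assms(4)] by auto
    then show ?thesis using Hhat_descend[OF assms(1), where j = j and q = q] assms(3)
      by (simp add: add.commute)
  qed
  then show ?thesis unfolding agrees_with_extension_def Oscale_def .
qed

end
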